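(* Let $\beta,\theta,\gamma>0$ and let $\mathcal{L}$ and $(M_t)$ be as in the context. There exists a function $\psi:\mathbb{N}_+\to(0,\infty)$ with $0<\inf_{\mathbb{N}_+}\psi<\sup_{\mathbb{N}_+}\psi\le1$ such that for every $V\in\mathcal{S}\cup\{[x^p]:p\ge1\}$: (i) there exist real constants $a<b$, $\xi$ and $\zeta>0$ such that $$\mathcal{L}V\le aV+\zeta\psi,\qquad b\psi\le\mathcal{L}\psi\le\xi\psi\quad\text{pointwise on }\mathbb{N}_+;$$ (ii) for $R$ large enough, the set $K=\{x\in\mathbb{N}_+:\psi(x)\ge V(x)/R\}$ is non-empty and finite, and for all $x,y\in K$ and $t_0>0$, $M_{t_0}(x,y)>0$.
   Context: $\mathcal{L}$ acts on functions $f:\mathbb{N}_+\to\mathbb{R}$ by $$\mathcal{L}f(n)=\beta n(f(n+1)-f(n))-\theta nf(n)+\sum_{j=1}^{n-1}\frac{\gamma n}{j(j+1)}\big(f(j)+f(n-j)-f(n)\big).$$ It is the generator of the first moment semigroup $M_tf(n)=\mathbb{E}_{\delta_n}[\sum_{\mathcal{C}}f(|\mathcal{C}|)]$ (sum over active clusters at time $t$) of the GFI process with parameters $\beta,\theta,\gamma$, started from one active cluster which is a uniform random recursive tree of size $n$; in this process each active cluster of size $n$ independently becomes inactive at rate $\theta n$, grows to size $n+1$ at rate $\beta n$, and splits into clusters of sizes $n-j$ and $j$ at rate $\gamma n/(j(j+1))$. $M_t(n,m)=M_t\mathbf{1}_m(n)$ is the mean number of active clusters of size $m$ at time $t$. $[x^p](n)=n^p$.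 $\mathcal{S}$ is the set of functions $f:\mathbb{N}_+\to[1,\infty)$ that are increasing with $\lim_{n\to\infty}f(n)=\infty$, satisfy $f(n+1)/(n+1)\le f(n)/n$ for all $n$, and $\sum_{j\ge1}f(j)/(j(j+1))<\infty$. *)

theory Defs
  imports "HOL-Analysis.Analysis"
begin

text \<open>Functions on the positive integers are modelled as nat => real; values at 0 are irrelevant.\<close>

definition genL :: "real \<Rightarrow> real \<Rightarrow> real \<Rightarrow> (nat \<Rightarrow> real) \<Rightarrow> nat \<Rightarrow> real" where
  "genL \<beta> \<theta> \<gamma> f n =
     \<beta> * real n * (f (n+1) - f n) - \<theta> * real n * f n
     + (\<Sum>j=1..n-1. \<gamma> * real n / (real j * (real j + 1)) * (f j + f (n-j) - f n))"

definition Lker :: "real \<Rightarrow> real \<Rightarrow> real \<Rightarrow> nat \<Rightarrow> nat \<Rightarrow> real" where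
  "Lker \<beta> \<theta> \<gamma> n l = genL \<beta> \<theta> \<gamma> (\<lambda>k. if k = l then 1 else 0) n"

text \<open>Feller's iteration for the minimal nonnegative solution of the backward
  Kolmogorov equation associated to the (finite-range-per-row) kernel Lker.
  From state n only the states 1..n+1 are reachable in one jump.\<close>
primrec Mit :: "real \<Rightarrow> real \<Rightarrow> real \<Rightarrow> nat \<Rightarrow> real \<Rightarrow> nat \<Rightarrow> nat \<Rightarrow> ennreal" where
  "Mit \<beta> \<theta> \<gamma> 0 t n m =
     (if n = m then ennreal (exp (Lker \<beta> \<theta> \<gamma> n n * t)) else 0)"
| "Mit \<beta> \<theta> \<gamma> (Suc k) t n m =
     (if n = m then ennreal (exp (Lker \<beta> \<theta> \<gamma> n n * t)) else 0)
     + (\<integral>\<^sup>+ s\<in>{0..t}. ennreal (exp (Lker \<beta> \<theta> \<gamma> n n * s))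
          * (\<Sum>l\<in>{1..n+1}-{n}. ennreal (Lker \<beta> \<theta> \<gamma> n l) * Mit \<beta> \<theta> \<gamma> k (t - s) l m) \<partial>lborel)"

text \<open>M_t(n,m): mean number of active clusters of size m at time t, started from one
  cluster of size n (minimal solution of the backward equation).\<close>
definition Mt :: "real \<Rightarrow> real \<Rightarrow> real \<Rightarrow> real \<Rightarrow> nat \<Rightarrow> nat \<Rightarrow> ennreal" where
  "Mt \<beta> \<theta> \<gamma> t n m = (SUP k. Mit \<beta> \<theta> \<gamma> k t n m)"

definition classS :: "(nat \<Rightarrow> real) set" where
  "classS = {f. (\<forall>n\<ge>1. 1 \<le> f n) \<and> (\<forall>n\<ge>1. f n \<le> f (n+1))
              \<and> filterlim f at_top sequentially
              \<and> (\<forall>n\<ge>1. f (n+1) / real (n+1) \<le> f n / real n)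
              \<and> summable (\<lambda>j. f (j+1) / (real (j+1) * real (j+2)))}"

end

theory Submission
  imports Defs
begin

(* If psi is constant A beyond some K, the growth term of L psi vanishes there and the
   fragmentation sum of the constant part contributes gamma n A (1 - 1/n); so L psi (n) is
   n (gamma A - theta A + gamma D) plus a bounded term, where D is the weighted mass of psi - A
   on {1..K}. Choosing psi on {1..K} so that this linear coefficient vanishes makes L psi bounded,
   and since psi is bounded below, L psi lies between two multiples of psi.
   Every admissible V satisfies L V <= - alpha V eventually, for every alpha > 0: the inactivation
   term - theta n V dominates, since growth contributes O(V) while fragmentation contributes O(n)
   for V in S and is non-positive for the superadditive powers.
   For (ii), V tends to infinity while c <= psi <= 1, so the level sets are finite and contain 1;
   M_t(x, y) > 0 since from every size the kernel jumps at positive rate to each smaller size and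
   to the next larger one, and Feller's iteration picks up every such path. *)

lemma sum_inverse_consecutive:
  assumes "1 \<le> a" "a \<le> b + 1"
  shows "(\<Sum>j=a..b. 1 / (real j * (real j + 1))) = 1 / real a - 1 / (real b + 1)"
proof -
  have "(\<Sum>j=a..b. 1 / (real j * (real j + 1))) = (\<Sum>j=a..b. - 1 / real (Suc j) - - 1 / real j)"
    using assms(1) by (intro sum.cong) (auto simp: field_simps)
  also have "\<dots> = 1 / real a - 1 / (real b + 1)"
    using sum_Suc_diff[of a b "\<lambda>j. - 1 / real j"] assms(2) by simp
  finally show ?thesis .
qed

lemma genL_alt_def:
  "genL \<beta> \<theta> \<gamma> f n = \<beta> * real n * (f (n+1) - f n) - \<theta> * real n * f n
     + \<gamma> * real n * (\<Sum>j=1..n-1. (f j + f (n-j) - f n) / (real j * (real j + 1)))"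
  unfolding genL_def sum_distrib_left by (simp add: mult.assoc)

lemma genL_eventually_const_eq:
  fixes f :: "nat \<Rightarrow> real"
  assumes tail: "\<forall>j>K. f j = A"
    and cancel: "\<gamma> * A - \<theta> * A + \<gamma> * (\<Sum>j=1..K. (f j - A) / (real j * (real j + 1))) = 0"
    and "K < n"
  shows "genL \<beta> \<theta> \<gamma> f n
    = \<gamma> * real n * (\<Sum>j=n-K..n-1. (f (n-j) - A) / (real j * (real j + 1))) - \<gamma> * A"
proof -
  define w where "w j = 1 / (real j * (real j + 1))" for j :: nat
  define D where "D = (\<Sum>j=1..K. (f j - A) * w j)"
  define E where "E = (\<Sum>j=n-K..n-1. (f (n-j) - A) * w j)"
  have fn: "f n = A" "f (n+1) = A" using tail \<open>K < n\<close> by auto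
  have "(\<Sum>j=1..n-1. (f j + f (n-j) - f n) * w j)
      = A * (\<Sum>j=1..n-1. w j) + (\<Sum>j=1..n-1. (f j - A) * w j) + (\<Sum>j=1..n-1. (f (n-j) - A) * w j)"
    unfolding fn by (simp add: sum_distrib_left sum.distrib[symmetric] algebra_simps)
  also have "(\<Sum>j=1..n-1. w j) = 1 - 1 / real n"
    using sum_inverse_consecutive[of 1 "n-1"] \<open>K < n\<close> by (simp add: w_def of_nat_diff)
  also have "(\<Sum>j=1..n-1. (f j - A) * w j) = D"
    unfolding D_def by (rule sum.mono_neutral_right) (use \<open>K < n\<close> tail in auto)
  also have "(\<Sum>j=1..n-1. (f (n-j) - A) * w j) = E"
    unfolding E_def by (rule sum.mono_neutral_right) (use \<open>K < n\<close> tail in auto)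
  finally have "genL \<beta> \<theta> \<gamma> f n = - \<theta> * real n * A + \<gamma> * real n * (A * (1 - 1 / real n) + D + E)"
    unfolding genL_alt_def fn w_def by (simp add: divide_inverse)
  also have "\<dots> = real n * (\<gamma> * A - \<theta> * A + \<gamma> * D) - \<gamma> * A + \<gamma> * real n * E"
    using \<open>K < n\<close> by (simp add: field_simps)
  also have "\<gamma> * A - \<theta> * A + \<gamma> * D = 0"
    using cancel unfolding D_def w_def by (simp add: divide_inverse)
  finally show ?thesis unfolding E_def w_def by (simp add: divide_inverse)
qed

lemma reflected_tail_sum_le:
  fixes g :: "nat \<Rightarrow> real"
  assumes "K < n"
  shows "real n * \<bar>\<Sum>j=n-K..n-1. g (n-j) / (real j * (real j + 1))\<bar> \<le> (\<Sum>i=1..K. \<bar>g i\<bar>) * real K"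
proof -
  define B where "B = (\<Sum>i=1..K. \<bar>g i\<bar>)"
  have "\<bar>g (n-j)\<bar> \<le> B" if "j \<in> {n-K..n-1}" for j
    unfolding B_def by (rule member_le_sum) (use that \<open>K < n\<close> in auto)
  then have "\<bar>\<Sum>j=n-K..n-1. g (n-j) / (real j * (real j + 1))\<bar> \<le> (\<Sum>j=n-K..n-1. B / (real j * (real j + 1)))"
    by (intro order.trans[OF sum_abs] sum_mono) (auto simp: abs_mult intro!: divide_right_mono)
  also have "\<dots> = B * (\<Sum>j=n-K..n-1. 1 / (real j * (real j + 1)))"
    by (simp add: sum_distrib_left)
  also have "\<dots> = B * (1 / real (n-K) - 1 / real n)"
    using sum_inverse_consecutive[of "n-K" "n-1"] \<open>K < n\<close> by simp
  finally have "real n * \<bar>\<Sum>j=n-K..n-1. g (n-j) / (real j * (real j + 1))\<bar>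
      \<le> real n * (B * (1 / real (n-K) - 1 / real n))"
    by (rule mult_left_mono) simp
  also have "\<dots> = B * real K / real (n-K)"
    using \<open>K < n\<close> by (simp add: field_simps of_nat_diff)
  also have "\<dots> \<le> B * real K / 1"
    using \<open>K < n\<close> by (intro divide_left_mono) (auto simp: B_def)
  finally show ?thesis by (simp add: B_def)
qed

lemma genL_eventually_const_bounded:
  fixes f :: "nat \<Rightarrow> real"
  assumes tail: "\<forall>j>K. f j = A"
    and cancel: "\<gamma> * A - \<theta> * A + \<gamma> * (\<Sum>j=1..K. (f j - A) / (real j * (real j + 1))) = 0"
  shows "Bseq (genL \<beta> \<theta> \<gamma> f)"
proof -
  define B where "B = (\<Sum>i=1..K. \<bar>f i - A\<bar>)"
  have "\<bar>genL \<beta> \<theta> \<gamma> f n\<bar> \<le> \<bar>\<gamma>\<bar> * (B * real K) + \<bar>\<gamma>\<bar> * \<bar>A\<bar>" if "K < n" for n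
  proof -
    define E where "E = (\<Sum>j=n-K..n-1. (f (n-j) - A) / (real j * (real j + 1)))"
    have "real n * \<bar>E\<bar> \<le> B * real K"
      unfolding E_def B_def using reflected_tail_sum_le[OF \<open>K < n\<close>, of "\<lambda>i. f i - A"] by simp
    then have "\<bar>\<gamma>\<bar> * (real n * \<bar>E\<bar>) \<le> \<bar>\<gamma>\<bar> * (B * real K)"
      by (rule mult_left_mono) simp
    moreover have "\<bar>\<gamma> * real n * E - \<gamma> * A\<bar> \<le> \<bar>\<gamma>\<bar> * (real n * \<bar>E\<bar>) + \<bar>\<gamma>\<bar> * \<bar>A\<bar>"
      using abs_triangle_ineq4[of "\<gamma> * real n * E" "\<gamma> * A"] by (simp add: abs_mult)
    ultimately show ?thesis
      using genL_eventually_const_eq[OF tail cancel \<open>K < n\<close>, where \<beta> = \<beta>] unfolding E_def by linarith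
  qed
  then show ?thesis
    by (intro BfunI eventually_mono[OF eventually_gt_at_top[of K]]) simp
qed

lemma bounded_genL_profile_exists:
  fixes \<beta> \<theta> \<gamma> :: real
  assumes "\<theta> > 0" "\<gamma> > 0"
  obtains \<psi> :: "nat \<Rightarrow> real" and c
  where "c > 0" "\<forall>n\<ge>1. c \<le> \<psi> n \<and> \<psi> n \<le> 1" "\<psi> 2 < \<psi> 1" "Bseq (genL \<beta> \<theta> \<gamma> \<psi>)"
proof -
  define K :: nat where "K = max 2 (nat \<lceil>\<gamma> / \<theta>\<rceil>)"
  have "2 \<le> K" "\<gamma> / \<theta> \<le> real K" unfolding K_def by linarith+
  then have "\<gamma> \<le> \<theta> * real K" using assms by (simp add: divide_le_eq mult.commute)
  define s where "s = (\<theta> * (real K + 1) - \<gamma>) / (\<gamma> * real K)"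
  have "s > 0"
    using \<open>2 \<le> K\<close> \<open>\<gamma> \<le> \<theta> * real K\<close> assms unfolding s_def by (intro divide_pos_pos) (auto simp: distrib_left)
  define A where "A = 1 / (1 + 2 * s)"
  have "A > 0" using \<open>s > 0\<close> by (simp add: A_def)
  \<comment> \<open>The bump at 1 and 2 has zero mass for the weights 1/(j(j+1)); it only makes \<psi>
    non-constant when \<theta> = \<gamma>, where s = 1.\<close>
  define v where "v n = (if n = 1 then 5/4 * s else if n = 2 then s / 4 else if n \<le> K then s else 1)"
    for n :: nat
  define \<psi> where "\<psi> n = A * v n" for n
  have bounds: "A * min (s/4) 1 \<le> \<psi> n \<and> \<psi> n \<le> 1" for n
  proof -
    have "min (s/4) 1 \<le> v n" "v n \<le> 1 + 2 * s" using \<open>s > 0\<close> by (auto simp: v_def)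
    then have "A * min (s/4) 1 \<le> A * v n" "A * v n \<le> A * (1 + 2 * s)"
      using \<open>A > 0\<close> by (auto intro: mult_left_mono)
    moreover have "A * (1 + 2 * s) = 1" using \<open>s > 0\<close> by (simp add: A_def)
    ultimately show ?thesis by (simp add: \<psi>_def)
  qed
  have "\<psi> 2 < \<psi> 1" using \<open>s > 0\<close> \<open>A > 0\<close> by (simp add: \<psi>_def v_def)
  have "(\<psi> j - A) / (real j * (real j + 1))
      = A * (s - 1) / (real j * (real j + 1)) + (if j = 1 then A * s / 8 else 0) - (if j = 2 then A * s / 8 else 0)"
    if "j \<in> {1..K}" for j
    using that by (auto simp: \<psi>_def v_def field_simps)
  then have "(\<Sum>j=1..K. (\<psi> j - A) / (real j * (real j + 1)))
      = A * (s - 1) * (\<Sum>j=1..K. 1 / (real j * (real j + 1)))"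
    using \<open>2 \<le> K\<close> by (simp add: sum.distrib sum_subtractf sum_distrib_left)
  also have "\<dots> = A * (s - 1) * real K / (real K + 1)"
    using sum_inverse_consecutive[of 1 K] \<open>2 \<le> K\<close> by (simp add: field_simps)
  also have "\<gamma> * \<dots> = A * (\<theta> - \<gamma>)"
  proof -
    have "\<gamma> * real K * (s - 1) = (\<theta> - \<gamma>) * (real K + 1)"
      using \<open>2 \<le> K\<close> assms by (simp add: s_def field_simps)
    then have "A * (\<gamma> * real K * (s - 1)) = A * ((\<theta> - \<gamma>) * (real K + 1))" by simp
    then show ?thesis by (simp add: field_simps)
  qed
  finally have "\<gamma> * A - \<theta> * A + \<gamma> * (\<Sum>j=1..K. (\<psi> j - A) / (real j * (real j + 1))) = 0"
    by (simp add: algebra_simps)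
  moreover have "\<forall>j>K. \<psi> j = A" using \<open>2 \<le> K\<close> by (simp add: \<psi>_def v_def)
  ultimately have "Bseq (genL \<beta> \<theta> \<gamma> \<psi>)" by (intro genL_eventually_const_bounded)
  moreover have "A * min (s/4) 1 > 0" using \<open>s > 0\<close> \<open>A > 0\<close> by simp
  ultimately show thesis using that bounds \<open>\<psi> 2 < \<psi> 1\<close> by blast
qed

definition arbitrarily_strong_drift :: "real \<Rightarrow> real \<Rightarrow> real \<Rightarrow> (nat \<Rightarrow> real) \<Rightarrow> bool" where
  "arbitrarily_strong_drift \<beta> \<theta> \<gamma> V \<longleftrightarrow>
     (\<forall>\<alpha>>0. eventually (\<lambda>n. genL \<beta> \<theta> \<gamma> V n \<le> - \<alpha> * V n) sequentially)"

lemma eventually_le_mult_of_nat: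
  assumes "\<theta> > 0"
  shows "eventually (\<lambda>n. C \<le> \<theta> * real n) sequentially"
  using filterlim_tendsto_pos_mult_at_top[OF tendsto_const assms filterlim_real_sequentially]
  unfolding filterlim_at_top by blast

lemma genL_classS_le:
  assumes V: "V \<in> classS" and "\<beta> \<ge> 0" "\<gamma> \<ge> 0" "1 \<le> n"
  shows "genL \<beta> \<theta> \<gamma> V n \<le> \<beta> * V n - \<theta> * real n * V n
     + \<gamma> * real n * (\<Sum>j. V (j+1) / (real (j+1) * real (j+2)))"
proof -
  have V1: "\<forall>n\<ge>1. 1 \<le> V n" and mono: "\<forall>n\<ge>1. V n \<le> V (n+1)"
    and ratio: "\<forall>n\<ge>1. V (n+1) / real (n+1) \<le> V n / real n"
    and summable: "summable (\<lambda>j. V (j+1) / (real (j+1) * real (j+2)))"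
    using V unfolding classS_def by auto
  have "real n * V (n+1) \<le> real (n+1) * V n"
    using ratio \<open>1 \<le> n\<close> by (simp add: field_simps del: of_nat_Suc)
  then have growth: "\<beta> * real n * (V (n+1) - V n) \<le> \<beta> * V n"
    using mult_left_mono[of "real n * (V (n+1) - V n)" "V n" \<beta>] \<open>\<beta> \<ge> 0\<close> by (simp add: algebra_simps)
  have "(\<Sum>j=1..n-1. (V j + V (n-j) - V n) / (real j * (real j + 1)))
      \<le> (\<Sum>j=1..n-1. V j / (real j * (real j + 1)))"
  proof (rule sum_mono)
    fix j assume j: "j \<in> {1..n-1}"
    have "V (n-j) \<le> V n"
      using lift_Suc_mono_le_ivl[of "{1..}" V "n-j" n] mono j by fastforce
    then show "(V j + V (n-j) - V n) / (real j * (real j + 1)) \<le> V j / (real j * (real j + 1))"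
      by (intro divide_right_mono) auto
  qed
  also have "\<dots> = (\<Sum>k<n-1. V (k+1) / (real (k+1) * real (k+2)))"
    using sum.atLeast1_atMost_eq[of "\<lambda>j. V j / (real j * (real j + 1))" "n-1"] by (simp add: add_ac)
  also have "\<dots> \<le> (\<Sum>j. V (j+1) / (real (j+1) * real (j+2)))"
  proof (intro sum_le_suminf summable)
    show "0 \<le> V (j+1) / (real (j+1) * real (j+2))" for j
      using V1[rule_format, of "j+1"] by (simp add: zero_le_divide_iff)
  qed simp
  finally have "\<gamma> * real n * (\<Sum>j=1..n-1. (V j + V (n-j) - V n) / (real j * (real j + 1)))
      \<le> \<gamma> * real n * (\<Sum>j. V (j+1) / (real (j+1) * real (j+2)))"
    using \<open>\<gamma> \<ge> 0\<close> by (intro mult_left_mono) auto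
  with growth show ?thesis unfolding genL_alt_def by linarith
qed

lemma classS_arbitrarily_strong_drift:
  assumes V: "V \<in> classS" and "\<beta> \<ge> 0" "\<theta> > 0" "\<gamma> \<ge> 0"
  shows "arbitrarily_strong_drift \<beta> \<theta> \<gamma> V"
  unfolding arbitrarily_strong_drift_def
proof (intro allI impI)
  fix \<alpha> :: real assume "\<alpha> > 0"
  define S where "S = (\<Sum>j. V (j+1) / (real (j+1) * real (j+2)))"
  have V_large: "eventually (\<lambda>n. 2 * \<gamma> * S / \<theta> \<le> V n) sequentially"
    using V unfolding classS_def filterlim_at_top by blast
  show "eventually (\<lambda>n. genL \<beta> \<theta> \<gamma> V n \<le> - \<alpha> * V n) sequentially"
    using V_large eventually_le_mult_of_nat[OF \<open>\<theta> > 0\<close>, of "2 * (\<beta> + \<alpha>)"] eventually_gt_at_top[of 0]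
  proof eventually_elim
    case (elim n)
    have "0 \<le> V n" using V elim unfolding classS_def by (auto intro: order.trans[OF zero_le_one])
    have "(\<beta> + \<alpha> - \<theta> * real n) * V n \<le> - (\<theta> * real n / 2) * V n"
      using elim \<open>0 \<le> V n\<close> by (intro mult_right_mono) auto
    also have "\<dots> \<le> - (\<theta> * real n / 2) * (2 * \<gamma> * S / \<theta>)"
      using elim \<open>\<theta> > 0\<close> by (intro mult_left_mono_neg) auto
    also have "\<dots> = - (\<gamma> * real n * S)"
      using \<open>\<theta> > 0\<close> by (simp add: field_simps)
    finally have "(\<beta> + \<alpha> - \<theta> * real n) * V n \<le> - (\<gamma> * real n * S)" .
    moreover have "genL \<beta> \<theta> \<gamma> V n \<le> \<beta> * V n - \<theta> * real n * V n + \<gamma> * real n * S"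
      unfolding S_def using genL_classS_le[OF V \<open>\<beta> \<ge> 0\<close> \<open>\<gamma> \<ge> 0\<close>] elim by simp
    ultimately show ?case by (simp add: algebra_simps)
  qed
qed

lemma powr_superadditive:
  fixes x y p :: real
  assumes "0 \<le> x" "0 \<le> y" "1 \<le> p"
  shows "x powr p + y powr p \<le> (x + y) powr p"
proof (cases "x + y = 0")
  case True
  then have "x = 0" "y = 0" using assms by auto
  then show ?thesis using assms by simp
next
  case False
  then have "x + y > 0" using assms by simp
  have shrink: "(u / (x + y)) powr p \<le> u / (x + y)" if "0 \<le> u" "u \<le> x + y" for u
    using powr_mono'[of 1 p "u / (x + y)"] that assms \<open>x + y > 0\<close> by simp
  have "x powr p + y powr p = (x + y) powr p * ((x / (x + y)) powr p + (y / (x + y)) powr p)"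
    using assms \<open>x + y > 0\<close> by (simp add: powr_divide distrib_left)
  also have "\<dots> \<le> (x + y) powr p * (x / (x + y) + y / (x + y))"
    using assms by (intro mult_left_mono add_mono shrink) auto
  also have "\<dots> = (x + y) powr p"
    using \<open>x + y > 0\<close> by (simp add: add_divide_distrib[symmetric])
  finally show ?thesis .
qed

lemma powr_Suc_diff_le:
  fixes p :: real
  assumes "1 \<le> p" "1 \<le> n"
  shows "real n * (real (n+1) powr p - real n powr p) \<le> p * 2 powr p * real n powr p"
proof -
  have "real n > 0" using assms by simp
  have "((\<lambda>x. x powr p) has_real_derivative p * x powr (p - 1)) (at x)" if "real n \<le> x" for x
    using \<open>real n > 0\<close> that by (intro has_real_derivative_powr) auto
  then obtain z where z: "real n < z" "z < real n + 1"
    and mvt: "(real n + 1) powr p - real n powr p = (real n + 1 - real n) * (p * z powr (p - 1))"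
    using MVT2[of "real n" "real n + 1" "\<lambda>x. x powr p" "\<lambda>x. p * x powr (p - 1)"] by auto
  have "real n * z powr (p - 1) \<le> (real n + 1) * (real n + 1) powr (p - 1)"
    using z assms \<open>real n > 0\<close> by (intro mult_mono powr_mono2) auto
  also have "\<dots> = (real n + 1) powr p"
    using powr_add[of "real n + 1" 1 "p - 1"] \<open>real n > 0\<close> by simp
  also have "\<dots> \<le> (2 * real n) powr p"
    using assms by (intro powr_mono2) auto
  also have "\<dots> = 2 powr p * real n powr p"
    by (simp add: powr_mult)
  finally have "p * (real n * z powr (p - 1)) \<le> p * (2 powr p * real n powr p)"
    using assms by (intro mult_left_mono) auto
  then show ?thesis using mvt by (simp add: algebra_simps)
qed

lemma powr_arbitrarily_strong_drift:
  fixes p :: real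
  assumes "1 \<le> p" "\<beta> \<ge> 0" "\<theta> > 0" "\<gamma> \<ge> 0"
  shows "arbitrarily_strong_drift \<beta> \<theta> \<gamma> (\<lambda>n. real n powr p)"
  unfolding arbitrarily_strong_drift_def
proof (intro allI impI)
  fix \<alpha> :: real assume "\<alpha> > 0"
  show "eventually (\<lambda>n. genL \<beta> \<theta> \<gamma> (\<lambda>n. real n powr p) n \<le> - \<alpha> * real n powr p) sequentially"
    using eventually_le_mult_of_nat[OF \<open>\<theta> > 0\<close>, of "\<beta> * p * 2 powr p + \<alpha>"] eventually_gt_at_top[of 0]
  proof eventually_elim
    case (elim n)
    have growth: "\<beta> * real n * (real (n+1) powr p - real n powr p) \<le> \<beta> * (p * 2 powr p * real n powr p)"
      using powr_Suc_diff_le[OF \<open>1 \<le> p\<close>, of n] elim \<open>\<beta> \<ge> 0\<close> by (simp add: mult.assoc mult_left_mono)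
    have "(\<Sum>j=1..n-1. (real j powr p + real (n-j) powr p - real n powr p) / (real j * (real j + 1))) \<le> 0"
    proof (intro sum_nonpos divide_nonpos_nonneg)
      fix j assume "j \<in> {1..n-1}"
      then have "real j + real (n-j) = real n" by (auto simp flip: of_nat_add)
      then show "real j powr p + real (n-j) powr p - real n powr p \<le> 0"
        using powr_superadditive[of "real j" "real (n-j)" p] \<open>1 \<le> p\<close> by simp
    qed simp
    then have "\<gamma> * real n * (\<Sum>j=1..n-1. (real j powr p + real (n-j) powr p - real n powr p) / (real j * (real j + 1))) \<le> 0"
      using \<open>\<gamma> \<ge> 0\<close> by (simp add: mult_nonneg_nonpos)
    moreover have "(\<beta> * p * 2 powr p + \<alpha> - \<theta> * real n) * real n powr p \<le> 0"
      using elim by (intro mult_nonpos_nonneg) auto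
    ultimately show ?case
      using growth unfolding genL_alt_def by (simp add: algebra_simps)
  qed
qed

lemma filterlim_powr_sequentially:
  fixes p :: real
  assumes "1 \<le> p"
  shows "filterlim (\<lambda>n. real n powr p) at_top sequentially"
proof (rule filterlim_at_top_mono[OF filterlim_real_sequentially])
  show "eventually (\<lambda>n. real n \<le> real n powr p) sequentially"
    using eventually_ge_at_top[of "1::nat"]
    by eventually_elim (use powr_mono[of 1 p] assms in fastforce)
qed

lemma eventually_nonpos_bounded_above:
  fixes h :: "nat \<Rightarrow> real"
  assumes "eventually (\<lambda>n. h n \<le> 0) sequentially"
  shows "\<exists>Z>0. \<forall>n. h n \<le> Z"
proof -
  have "Bseq (\<lambda>n. max 0 (h n))"
    by (rule BfunI[where K = 0]) (use assms in \<open>auto elim: eventually_mono\<close>)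
  then obtain Z where "Z > 0" "\<forall>n. norm (max 0 (h n)) \<le> Z" by (rule BseqE)
  then show ?thesis by force
qed

lemma lyapunov_bounds_of_drift:
  fixes \<psi> V :: "nat \<Rightarrow> real"
  assumes "c > 0" and \<psi>_ge: "\<forall>n\<ge>1. c \<le> \<psi> n"
    and "Bseq (genL \<beta> \<theta> \<gamma> \<psi>)" and drift: "arbitrarily_strong_drift \<beta> \<theta> \<gamma> V"
  shows "\<exists>a b \<xi> \<zeta> :: real. a < b \<and> \<zeta> > 0 \<and>
           (\<forall>n\<ge>1. genL \<beta> \<theta> \<gamma> V n \<le> a * V n + \<zeta> * \<psi> n
                  \<and> b * \<psi> n \<le> genL \<beta> \<theta> \<gamma> \<psi> n
                  \<and> genL \<beta> \<theta> \<gamma> \<psi> n \<le> \<xi> * \<psi> n)"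
proof -
  obtain M where "M > 0" and M: "\<And>n. \<bar>genL \<beta> \<theta> \<gamma> \<psi> n\<bar> \<le> M"
    using \<open>Bseq (genL \<beta> \<theta> \<gamma> \<psi>)\<close> by (auto elim: BseqE)
  define \<alpha> where "\<alpha> = 1 + M / c"
  have "\<alpha> > 0" using \<open>M > 0\<close> \<open>c > 0\<close> by (simp add: \<alpha>_def add_pos_pos)
  then have "eventually (\<lambda>n. genL \<beta> \<theta> \<gamma> V n + \<alpha> * V n \<le> 0) sequentially"
    using drift unfolding arbitrarily_strong_drift_def by (auto elim!: allE[of _ \<alpha>] eventually_mono)
  then have "\<exists>Z>0. \<forall>n. genL \<beta> \<theta> \<gamma> V n + \<alpha> * V n \<le> Z"
    by (rule eventually_nonpos_bounded_above)
  then obtain Z where "Z > 0" and Z: "\<And>n. genL \<beta> \<theta> \<gamma> V n + \<alpha> * V n \<le> Z" by blast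
  show ?thesis
  proof (rule exI[of _ "- \<alpha>"], rule exI[of _ "- M / c"], rule exI[of _ "M / c"], rule exI[of _ "Z / c"],
      intro conjI allI impI)
    show "- \<alpha> < - M / c" "Z / c > 0" using \<open>Z > 0\<close> \<open>c > 0\<close> by (auto simp: \<alpha>_def)
    fix n :: nat assume "1 \<le> n"
    then have "1 \<le> \<psi> n / c" using \<psi>_ge \<open>c > 0\<close> by simp
    then have "Z \<le> Z / c * \<psi> n" and "M \<le> M / c * \<psi> n"
      using \<open>Z > 0\<close> \<open>M > 0\<close> mult_left_mono[of 1 "\<psi> n / c"] by auto
    then show "genL \<beta> \<theta> \<gamma> V n \<le> - \<alpha> * V n + Z / c * \<psi> n"
      and "- M / c * \<psi> n \<le> genL \<beta> \<theta> \<gamma> \<psi> n" and "genL \<beta> \<theta> \<gamma> \<psi> n \<le> M / c * \<psi> n"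
      using Z[of n] M[of n] by (auto simp: abs_le_iff)
  qed
qed

lemma level_sets_finite_nonempty:
  fixes \<psi> V :: "nat \<Rightarrow> real"
  assumes "c > 0" "\<forall>n\<ge>1. c \<le> \<psi> n \<and> \<psi> n \<le> 1" "filterlim V at_top sequentially"
  shows "\<exists>R0. \<forall>R\<ge>R0. {x. 1 \<le> x \<and> \<psi> x \<ge> V x / R} \<noteq> {} \<and> finite {x. 1 \<le> x \<and> \<psi> x \<ge> V x / R}"
proof (intro exI[of _ "max 1 (V 1 / c)"] allI impI conjI)
  fix R :: real assume R: "max 1 (V 1 / c) \<le> R"
  then have "R > 0" by simp
  have "V 1 / R \<le> c"
    using R \<open>c > 0\<close> \<open>R > 0\<close> by (simp add: divide_le_eq mult.commute)
  then show "{x. 1 \<le> x \<and> \<psi> x \<ge> V x / R} \<noteq> {}"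
    using assms(2) by (intro ex_in_conv[THEN iffD1] exI[of _ 1]) force
  obtain N where N: "\<And>n. N \<le> n \<Longrightarrow> R + 1 \<le> V n"
    using assms(3) unfolding filterlim_at_top eventually_sequentially by blast
  have "x < N" if "1 \<le> x" "\<psi> x \<ge> V x / R" for x
  proof (rule ccontr)
    assume "\<not> x < N"
    then have "R + 1 \<le> V x" using N by simp
    moreover have "V x / R \<le> 1" using that assms(2) by force
    ultimately show False using \<open>R > 0\<close> by (simp add: divide_le_eq)
  qed
  then have "{x. 1 \<le> x \<and> \<psi> x \<ge> V x / R} \<subseteq> {..<N}" by auto
  then show "finite {x. 1 \<le> x \<and> \<psi> x \<ge> V x / R}"
    by (rule finite_subset) simp
qed

lemma exp_neg_abs_le:
  fixes a s T :: real
  assumes "0 \<le> s" "s \<le> T"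
  shows "exp (- \<bar>a\<bar> * T) \<le> exp (a * s)"
proof -
  have "- \<bar>a\<bar> * T \<le> - \<bar>a\<bar> * s" using assms by (simp add: mult_left_mono)
  also have "\<dots> \<le> a * s" using assms abs_ge_self[of "- (a * s)"] by (simp add: abs_mult)
  finally show ?thesis by simp
qed

lemma Lker_growth: "Lker \<beta> \<theta> \<gamma> n (n+1) = \<beta> * real n"
proof -
  have "(\<Sum>j=1..n-1. \<gamma> * real n / (real j * (real j + 1)) *
      ((if j = n+1 then 1 else 0) + (if n - j = n+1 then 1 else 0) - (if n = n+1 then 1 else 0))) = (0::real)"
    by (rule sum.neutral) auto
  then show ?thesis unfolding Lker_def genL_def by simp
qed

lemma Lker_fragmentation_pos:
  assumes "\<gamma> > 0" "1 \<le> l" "l < n"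
  shows "Lker \<beta> \<theta> \<gamma> n l > 0"
proof -
  define F where "F j = \<gamma> * real n / (real j * (real j + 1)) *
      ((if j = l then 1 else 0) + (if n - j = l then 1 else 0) - (if n = l then 1 else 0))" for j
  have "0 < F l" unfolding F_def using assms by (auto intro!: mult_pos_pos add_pos_nonneg)
  also have "F l \<le> (\<Sum>j=1..n-1. F j)"
    by (rule member_le_sum) (use assms in \<open>auto simp: F_def\<close>)
  finally show ?thesis using assms unfolding Lker_def genL_def F_def by simp
qed

lemma Lker_pos:
  assumes "\<beta> > 0" "\<gamma> > 0" "1 \<le> n" "l \<in> {1..n+1} - {n}"
  shows "Lker \<beta> \<theta> \<gamma> n l > 0"
  using assms Lker_growth[of \<beta> \<theta> \<gamma> n] Lker_fragmentation_pos[of \<gamma> l n \<beta> \<theta>]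
  by (cases "l = n + 1") auto

lemma Mit_diagonal_uniform_pos:
  "\<exists>\<epsilon>>0. \<forall>t\<in>{0..T}. ennreal \<epsilon> \<le> Mit \<beta> \<theta> \<gamma> k t n n"
proof (intro exI[of _ "exp (- \<bar>Lker \<beta> \<theta> \<gamma> n n\<bar> * T)"] conjI ballI)
  fix t assume "t \<in> {0..T}"
  then have "ennreal (exp (- \<bar>Lker \<beta> \<theta> \<gamma> n n\<bar> * T)) \<le> ennreal (exp (Lker \<beta> \<theta> \<gamma> n n * t))"
    by (intro ennreal_leI exp_neg_abs_le) auto
  also have "\<dots> \<le> Mit \<beta> \<theta> \<gamma> k t n n"
    by (cases k) auto
  finally show "ennreal (exp (- \<bar>Lker \<beta> \<theta> \<gamma> n n\<bar> * T)) \<le> Mit \<beta> \<theta> \<gamma> k t n n" .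
qed simp

lemma Mit_Suc_ge_first_jump:
  assumes "l \<in> {1..n+1} - {n}" "0 \<le> Lker \<beta> \<theta> \<gamma> n l" "0 \<le> \<epsilon>" "0 < \<tau>"
    and lower: "\<forall>t\<in>{\<tau>..T}. ennreal \<epsilon> \<le> Mit \<beta> \<theta> \<gamma> k t l m"
    and t: "t \<in> {2 * \<tau>..T}"
  shows "ennreal (exp (- \<bar>Lker \<beta> \<theta> \<gamma> n n\<bar> * T) * Lker \<beta> \<theta> \<gamma> n l * \<epsilon> * \<tau>)
    \<le> Mit \<beta> \<theta> \<gamma> (Suc k) t n m"
proof -
  define c where "c = exp (- \<bar>Lker \<beta> \<theta> \<gamma> n n\<bar> * T) * Lker \<beta> \<theta> \<gamma> n l * \<epsilon>"
  have integrand: "ennreal c * indicator {0..\<tau>} s \<le>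
      ennreal (exp (Lker \<beta> \<theta> \<gamma> n n * s))
      * (\<Sum>l\<in>{1..n+1}-{n}. ennreal (Lker \<beta> \<theta> \<gamma> n l) * Mit \<beta> \<theta> \<gamma> k (t - s) l m)
      * indicator {0..t} s" for s
  proof (cases "s \<in> {0..\<tau>}")
    case True
    have "ennreal c = ennreal (exp (- \<bar>Lker \<beta> \<theta> \<gamma> n n\<bar> * T)) * (ennreal (Lker \<beta> \<theta> \<gamma> n l) * ennreal \<epsilon>)"
      using assms(2,3) by (simp add: c_def ennreal_mult mult.assoc)
    also have "\<dots> \<le> ennreal (exp (Lker \<beta> \<theta> \<gamma> n n * s)) * (ennreal (Lker \<beta> \<theta> \<gamma> n l) * Mit \<beta> \<theta> \<gamma> k (t - s) l m)"
      using True t lower by (intro mult_mono mult_left_mono ennreal_leI exp_neg_abs_le) auto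
    also have "\<dots> \<le> ennreal (exp (Lker \<beta> \<theta> \<gamma> n n * s))
        * (\<Sum>l\<in>{1..n+1}-{n}. ennreal (Lker \<beta> \<theta> \<gamma> n l) * Mit \<beta> \<theta> \<gamma> k (t - s) l m)"
      by (intro mult_left_mono member_le_sum assms(1)) auto
    finally show ?thesis using True t \<open>0 < \<tau>\<close> by simp
  qed simp
  have "ennreal (c * \<tau>) = (\<integral>\<^sup>+ s. ennreal c * indicator {0..\<tau>} s \<partial>lborel)"
    using assms(2-4) by (simp add: c_def nn_integral_cmult_indicator ennreal_mult[symmetric])
  also have "\<dots> \<le> (\<integral>\<^sup>+ s\<in>{0..t}. ennreal (exp (Lker \<beta> \<theta> \<gamma> n n * s))
      * (\<Sum>l\<in>{1..n+1}-{n}. ennreal (Lker \<beta> \<theta> \<gamma> n l) * Mit \<beta> \<theta> \<gamma> k (t - s) l m) \<partial>lborel)"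
    by (intro nn_integral_mono integrand)
  also have "\<dots> \<le> Mit \<beta> \<theta> \<gamma> (Suc k) t n m"
    by simp
  finally show ?thesis by (simp add: c_def)
qed

lemma Mit_uniform_pos:
  assumes "\<beta> > 0" "\<gamma> > 0"
    and "1 \<le> n" "1 \<le> m" "m = n \<or> (0 < k \<and> m \<le> n + k)" "0 < T1"
  shows "\<exists>\<epsilon>>0. \<forall>t\<in>{T1..T2}. ennreal \<epsilon> \<le> Mit \<beta> \<theta> \<gamma> k t n m"
  using assms(3-)
proof (induction k arbitrary: n T1)
  case 0
  then show ?case
    using Mit_diagonal_uniform_pos[of T2 \<beta> \<theta> \<gamma> 0 n] by force
next
  case (Suc k)
  show ?case
  proof (cases "m = n")
    case True
    then show ?thesis
      using Mit_diagonal_uniform_pos[of T2 \<beta> \<theta> \<gamma> "Suc k" n] Suc.prems by force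
  next
    case False
    define l where "l = (if m < n then m else n + 1)"
    have l: "l \<in> {1..n+1} - {n}" "m = l \<or> (0 < k \<and> m \<le> l + k)"
      using Suc.prems False unfolding l_def by auto
    have "Lker \<beta> \<theta> \<gamma> n l > 0" using Lker_pos[OF assms(1,2) \<open>1 \<le> n\<close> l(1)] .
    obtain \<epsilon> where "\<epsilon> > 0" and "\<forall>t\<in>{T1/2..T2}. ennreal \<epsilon> \<le> Mit \<beta> \<theta> \<gamma> k t l m"
      using Suc.IH[of l "T1/2"] l Suc.prems by auto
    then show ?thesis
      using Mit_Suc_ge_first_jump[OF l(1), where \<epsilon> = \<epsilon> and \<tau> = "T1/2" and T = T2]
        \<open>Lker \<beta> \<theta> \<gamma> n l > 0\<close> \<open>0 < T1\<close>
      by (intro exI[of _ "exp (- \<bar>Lker \<beta> \<theta> \<gamma> n n\<bar> * T2) * Lker \<beta> \<theta> \<gamma> n l * \<epsilon> * (T1/2)"]) auto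
  qed
qed

lemma Mt_pos:
  assumes "\<beta> > 0" "\<gamma> > 0" "1 \<le> x" "1 \<le> y" "t > 0"
  shows "Mt \<beta> \<theta> \<gamma> t x y > 0"
proof -
  obtain \<epsilon> where "\<epsilon> > 0" and "ennreal \<epsilon> \<le> Mit \<beta> \<theta> \<gamma> (x+y) t x y"
    using Mit_uniform_pos[OF assms(1-4), of "x+y" t t \<theta>] assms(3,5) by auto
  note \<open>ennreal \<epsilon> \<le> Mit \<beta> \<theta> \<gamma> (x+y) t x y\<close>
  also have "Mit \<beta> \<theta> \<gamma> (x+y) t x y \<le> Mt \<beta> \<theta> \<gamma> t x y"
    unfolding Mt_def by (rule SUP_upper) simp
  finally show ?thesis using \<open>\<epsilon> > 0\<close> by (metis ennreal_less_zero_iff order.strict_trans2)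
qed

theorem lemma4p2:
  fixes \<beta> \<theta> \<gamma> :: real
  assumes "\<beta> > 0" "\<theta> > 0" "\<gamma> > 0"
  shows "\<exists>\<psi> :: nat \<Rightarrow> real.
    (\<forall>n\<ge>1. 0 < \<psi> n)
    \<and> (\<exists>c>0. \<forall>n\<ge>1. c \<le> \<psi> n)
    \<and> (\<forall>n\<ge>1. \<psi> n \<le> 1)
    \<and> (\<exists>m\<ge>1. \<exists>n\<ge>1. \<psi> m < \<psi> n)
    \<and> (\<forall>V \<in> classS \<union> {(\<lambda>n. real n powr p) | p::real. p \<ge> 1}.
         (\<exists>a b \<xi> \<zeta> :: real. a < b \<and> \<zeta> > 0 \<and>
            (\<forall>n\<ge>1. genL \<beta> \<theta> \<gamma> V n \<le> a * V n + \<zeta> * \<psi> n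
                   \<and> b * \<psi> n \<le> genL \<beta> \<theta> \<gamma> \<psi> n
                   \<and> genL \<beta> \<theta> \<gamma> \<psi> n \<le> \<xi> * \<psi> n))
       \<and> (\<exists>R0. \<forall>R\<ge>R0.
            {x. 1 \<le> x \<and> \<psi> x \<ge> V x / R} \<noteq> {}
          \<and> finite {x. 1 \<le> x \<and> \<psi> x \<ge> V x / R}
          \<and> (\<forall>x\<in>{x. 1 \<le> x \<and> \<psi> x \<ge> V x / R}. \<forall>y\<in>{x. 1 \<le> x \<and> \<psi> x \<ge> V x / R}.
               \<forall>t0>0. Mt \<beta> \<theta> \<gamma> t0 x y > 0)))"
proof -
  obtain \<psi> c where "c > 0" and \<psi>_bounds: "\<forall>n\<ge>1. c \<le> \<psi> n \<and> \<psi> n \<le> 1"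
    and "\<psi> 2 < \<psi> 1" and "Bseq (genL \<beta> \<theta> \<gamma> \<psi>)"
    using bounded_genL_profile_exists[OF assms(2,3)] .
  have admissible: "arbitrarily_strong_drift \<beta> \<theta> \<gamma> V \<and> filterlim V at_top sequentially"
    if "V \<in> classS \<union> {(\<lambda>n. real n powr p) | p::real. p \<ge> 1}" for V
    using that assms classS_arbitrarily_strong_drift[of V \<beta> \<theta> \<gamma>]
      powr_arbitrarily_strong_drift[of _ \<beta> \<theta> \<gamma>] filterlim_powr_sequentially
    by (auto simp: classS_def)
  have "\<exists>m\<ge>1. \<exists>n\<ge>1. \<psi> m < \<psi> n"
    using \<open>\<psi> 2 < \<psi> 1\<close> one_le_numeral[where 'a = nat] by blast
  show ?thesis
  proof (intro exI[of _ \<psi>] conjI ballI, goal_cases)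
    case (5 V)
    then show ?case
      using admissible lyapunov_bounds_of_drift[OF \<open>c > 0\<close> _ \<open>Bseq (genL \<beta> \<theta> \<gamma> \<psi>)\<close>] \<psi>_bounds by blast
  next
    case (6 V)
    then obtain R0 where "\<forall>R\<ge>R0. {x. 1 \<le> x \<and> \<psi> x \<ge> V x / R} \<noteq> {} \<and> finite {x. 1 \<le> x \<and> \<psi> x \<ge> V x / R}"
      using admissible level_sets_finite_nonempty[OF \<open>c > 0\<close> \<psi>_bounds] by blast
    then show ?case using Mt_pos[OF assms(1,3)] by (intro exI[of _ R0]) auto
  qed (use \<open>c > 0\<close> \<psi>_bounds \<open>\<exists>m\<ge>1. \<exists>n\<ge>1. \<psi> m < \<psi> n\<close> in force)+
qed

end
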